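(* Let $\mathbf g=(g_1,\dots,g_s)$, $Q=\mathcal Q(\mathbf g)$ and $J=\sqrt[\mathbb R]{\operatorname{supp}Q}$. Then for every $d\in\mathbb N$ there exists $k\ge d$ such that $J_d=J\cap\mathbb R[\mathbf X]_d\subseteq\overline{\mathcal Q_k(\mathbf g)}$, the closure being taken in $\mathbb R[\mathbf X]_k$.
   Context: $\mathbb R[\mathbf X]=\mathbb R[X_1,\dots,X_n]$, $\mathbb R[\mathbf X]_t$ polynomials of degree $\le t$ with Euclidean topology; $\Sigma^2$ sums of squares, $\Sigma^2_t=\Sigma^2\cap\mathbb R[\mathbf X]_t$. $\mathcal Q_t(\mathbf g)=\{s_0+\sum_js_jg_j:s_0\in\Sigma^2_t,s_j\in\Sigma^2,\deg s_j\le t-\deg g_j\}$, $\mathcal Q(\mathbf g)=\bigcup_t\mathcal Q_t(\mathbf g)$, $\operatorname{supp}Q=Q\cap(-Q)$, $\sqrt[\mathbb R]{I}=\{p:\exists m\in\mathbb N, s\in\Sigma^2,\ p^{2m}+s\in I\}$. *)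

theory Defs
  imports "HOL-Analysis.Analysis" "HOL-Library.Poly_Mapping"
begin

text \<open>Real polynomials in the variables indexed by the type 'v: a monomial is an
  exponent vector, a polynomial is a finitely supported coefficient map.\<close>
type_synonym 'v rpoly = "('v \<Rightarrow>\<^sub>0 nat) \<Rightarrow>\<^sub>0 real"

definition mon_deg :: "('v \<Rightarrow>\<^sub>0 nat) \<Rightarrow> nat" where
  "mon_deg m = (\<Sum>v\<in>Poly_Mapping.keys m. Poly_Mapping.lookup m v)"

text \<open>Total degree (the zero polynomial gets degree 0 here).\<close>
definition tdeg :: "'v rpoly \<Rightarrow> nat" where
  "tdeg p = Max (insert 0 (mon_deg ` Poly_Mapping.keys p))"

definition polys_upto :: "nat \<Rightarrow> 'v rpoly set" where
  "polys_upto t = {p. \<forall>m\<in>Poly_Mapping.keys p. mon_deg m \<le> t}"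

definition sos :: "'v rpoly set" where
  "sos = {p. \<exists>fs. p = sum_list (map (\<lambda>q. q * q) fs)}"

text \<open>Truncated quadratic module \<open>Q_t(g)\<close>; the condition on s_j expresses
  \<open>deg s_j \<le> t - deg g_j\<close> with the convention \<open>deg 0 = -\<infinity>\<close>.\<close>
definition qmod_trunc :: "'v rpoly list \<Rightarrow> nat \<Rightarrow> 'v rpoly set" where
  "qmod_trunc gs t = {s0 + (\<Sum>j<length gs. ss j * gs ! j) | s0 ss.
      s0 \<in> sos \<and> s0 \<in> polys_upto t \<and>
      (\<forall>j<length gs. ss j \<in> sos \<and> (ss j = 0 \<or> tdeg (ss j) + tdeg (gs ! j) \<le> t))}"

definition qmod :: "'v rpoly list \<Rightarrow> 'v rpoly set" where
  "qmod gs = (\<Union>t. qmod_trunc gs t)"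

definition supp :: "'v rpoly set \<Rightarrow> 'v rpoly set" where
  "supp Q = Q \<inter> uminus ` Q"

definition real_radical :: "'v rpoly set \<Rightarrow> 'v rpoly set" where
  "real_radical I = {p. \<exists>(m::nat) s. s \<in> sos \<and> p ^ (2 * m) + s \<in> I}"

text \<open>Closure of S taken inside \<open>\<real>[X]_k\<close> with its Euclidean topology: a polynomial
  is identified with its coefficient function; on \<open>\<real>[X]_k\<close> only finitely many
  coordinates are nonzero, so the product topology restricts to the Euclidean one.\<close>
definition closure_in_deg :: "nat \<Rightarrow> 'v rpoly set \<Rightarrow> 'v rpoly set" where
  "closure_in_deg k S = {p \<in> polys_upto k. Poly_Mapping.lookup p \<in> closure (Poly_Mapping.lookup ` (S \<inter> polys_upto k))}"

end

theory Submission
  imports Defs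
begin

text \<open>If \<open>p \<in> J\<close>, then \<open>-p\<^sup>2\<^sup>m \<in> Q\<close> for some \<open>m \<ge> 1\<close>, and for every \<open>\<epsilon> > 0\<close> the univariate
  certificate \<open>\<epsilon> + t + c t\<^sup>2\<^sup>m \<in> \<Sigma>\<^sup>2\<close> (suitable \<open>c \<ge> 0\<close>) gives
  \<open>p + \<epsilon> = (\<epsilon> + p + c p\<^sup>2\<^sup>m) + c (-p\<^sup>2\<^sup>m) \<in> Q\<^sub>k\<close> for all large \<open>k\<close>, with \<open>k\<close> independent
  of \<open>\<epsilon>\<close>. Letting \<open>\<epsilon> \<rightarrow> 0\<close> puts \<open>p\<close> into the closure of \<open>Q\<^sub>k\<close>. The set of \<open>p\<close> with
  \<open>\<plusminus>p + \<epsilon> \<in> Q\<^sub>k\<close> for all \<open>\<epsilon> > 0\<close> is a linear subspace, so a single \<open>k\<close> serving a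
  (finite) basis of the span of \<open>J\<^sub>d\<close> serves all of \<open>J\<^sub>d\<close>.\<close>

definition pconst :: "real \<Rightarrow> 'v rpoly" where
  "pconst c = Poly_Mapping.single 0 c"

lemma pconst_add: "pconst (a + b) = pconst a + pconst b"
  by (simp add: pconst_def single_add)

lemma pconst_mult: "pconst (a * b) = pconst a * pconst b"
  by (simp add: pconst_def mult_single)

lemma pconst_uminus: "pconst (- a) = - pconst a"
  by (simp add: pconst_def single_uminus)

lemma pconst_0 [simp]: "pconst 0 = 0"
  and pconst_1 [simp]: "pconst 1 = 1"
  and pconst_numeral [simp]: "pconst (numeral n) = numeral n"
  by (simp_all add: pconst_def)

lemma mon_deg_add:
  fixes a b :: "'v::finite \<Rightarrow>\<^sub>0 nat"
  shows "mon_deg (a + b) = mon_deg a + mon_deg b"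
proof -
  have "mon_deg m = (\<Sum>v\<in>UNIV. Poly_Mapping.lookup m v)" for m :: "'v \<Rightarrow>\<^sub>0 nat"
    unfolding mon_deg_def by (rule sum.mono_neutral_left) (auto simp: in_keys_iff)
  then show ?thesis by (simp add: lookup_add sum.distrib)
qed

lemma polys_upto_mono: "p \<in> polys_upto a \<Longrightarrow> a \<le> b \<Longrightarrow> p \<in> polys_upto b"
  by (auto simp: polys_upto_def)

lemma polys_upto_add: "p \<in> polys_upto a \<Longrightarrow> q \<in> polys_upto a \<Longrightarrow> p + q \<in> polys_upto a"
  using keys_add[of p q] by (auto simp: polys_upto_def)

lemma pconst_in_polys_upto: "pconst c \<in> polys_upto a"
  by (auto simp: polys_upto_def pconst_def mon_deg_def)

lemma polys_upto_mult:
  fixes p q :: "('v::finite) rpoly"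
  shows "p \<in> polys_upto a \<Longrightarrow> q \<in> polys_upto b \<Longrightarrow> p * q \<in> polys_upto (a + b)"
  using keys_mult[of p q] by (fastforce simp: polys_upto_def mon_deg_add intro: add_mono)

lemma polys_upto_power:
  fixes p :: "('v::finite) rpoly"
  shows "p \<in> polys_upto a \<Longrightarrow> p ^ n \<in> polys_upto (n * a)"
  using pconst_in_polys_upto[of 1] by (induction n) (auto dest: polys_upto_mult)

lemma tdeg_le_iff: "tdeg p \<le> t \<longleftrightarrow> p \<in> polys_upto t"
  by (auto simp: tdeg_def polys_upto_def)

lemma polys_upto_tdeg: "p \<in> polys_upto (tdeg p)"
  using tdeg_le_iff by blast

lemma sos_square: "q * q \<in> sos"
  unfolding sos_def by (auto intro!: exI[of _ "[q]"])

lemma sos_0: "0 \<in> sos"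
  unfolding sos_def by (auto intro!: exI[of _ "[]"])

lemma sos_add: "a \<in> sos \<Longrightarrow> b \<in> sos \<Longrightarrow> a + b \<in> sos"
proof -
  assume "a \<in> sos" "b \<in> sos"
  then obtain fs gs where "a = sum_list (map (\<lambda>q. q * q) fs)" "b = sum_list (map (\<lambda>q. q * q) gs)"
    by (auto simp: sos_def)
  then show ?thesis unfolding sos_def by (auto intro!: exI[of _ "fs @ gs"])
qed

lemma sos_mult_square: "s \<in> sos \<Longrightarrow> h * h * s \<in> sos"
proof -
  assume "s \<in> sos"
  then obtain fs where s: "s = sum_list (map (\<lambda>q. q * q) fs)" by (auto simp: sos_def)
  have "h * h * s = sum_list (map (\<lambda>q. q * q) (map ((*) h) fs))"
    unfolding s by (induction fs) (auto simp: algebra_simps)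
  then show ?thesis unfolding sos_def by blast
qed

lemma sos_mult: "a \<in> sos \<Longrightarrow> b \<in> sos \<Longrightarrow> a * b \<in> sos"
proof -
  assume "a \<in> sos" "b \<in> sos"
  then obtain fs where "a = sum_list (map (\<lambda>q. q * q) fs)" by (auto simp: sos_def)
  with \<open>b \<in> sos\<close> show ?thesis
    by (induction fs arbitrary: a) (auto simp: distrib_right sos_0 sos_add sos_mult_square)
qed

lemma sos_pconst: "c \<ge> 0 \<Longrightarrow> pconst c \<in> sos"
  using sos_square[of "pconst (sqrt c)"] by (simp add: pconst_mult[symmetric])

lemma sos_pconst_mult: "c \<ge> 0 \<Longrightarrow> s \<in> sos \<Longrightarrow> pconst c * s \<in> sos"
  by (intro sos_mult sos_pconst)

text \<open>The induction step multiplies the certificate for \<open>(1, a')\<close> by \<open>p\<^sup>2\<close> and adds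
  \<open>a' (p\<^sup>2 - b)\<^sup>2\<close>, with \<open>a', b\<close> chosen so that \<open>2 a' b = 1 + a\<close> and \<open>a' b\<^sup>2 = \<epsilon>\<close>.\<close>
lemma sos_pconst_minus_square_plus_power:
  fixes p :: "'v rpoly"
  assumes "1 \<le> m" "\<epsilon> > 0" "a \<ge> 0"
  shows "\<exists>c\<ge>0. pconst \<epsilon> - pconst a * p\<^sup>2 + pconst c * p ^ (2 * m) \<in> sos"
  using assms
proof (induction m arbitrary: \<epsilon> a rule: nat_induct_at_least)
  case base
  then show ?case by (intro exI[of _ a]) (simp add: sos_pconst)
next
  case (Suc m)
  define a' where "a' = (1 + a)\<^sup>2 / (4 * \<epsilon>)"
  define b where "b = 2 * \<epsilon> / (1 + a)"
  have "a' > 0" using Suc.prems by (simp add: a'_def)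
  have coeff1: "2 * a' * b = 1 + a"
    using Suc.prems by (simp add: a'_def b_def power2_eq_square)
  have "a' * b * b = (2 * a' * b) * b / 2" by simp
  also have "\<dots> = \<epsilon>"
    unfolding coeff1 using Suc.prems by (simp add: b_def)
  finally have coeff2: "a' * b * b = \<epsilon>" .
  obtain c where "c \<ge> 0" and c: "pconst 1 - pconst a' * p\<^sup>2 + pconst c * p ^ (2 * m) \<in> sos"
    using Suc.IH[of 1 a'] \<open>a' > 0\<close> by auto
  have sq: "pconst a' * ((p\<^sup>2 - pconst b) * (p\<^sup>2 - pconst b)) \<in> sos"
    using \<open>a' > 0\<close> by (intro sos_pconst_mult sos_square) simp
  have "p * p * (pconst 1 - pconst a' * p\<^sup>2 + pconst c * p ^ (2 * m))
      + pconst a' * ((p\<^sup>2 - pconst b) * (p\<^sup>2 - pconst b))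
      = pconst \<epsilon> - pconst a * p\<^sup>2 + pconst c * p ^ (2 * Suc m)"
  proof -
    have "pconst a' * ((p\<^sup>2 - pconst b) * (p\<^sup>2 - pconst b))
        = pconst a' * p ^ 4 - pconst (2 * a' * b) * p\<^sup>2 + pconst (a' * b * b)"
      by (simp add: pconst_mult algebra_simps power2_eq_square power4_eq_xxxx)
    then show ?thesis
      unfolding coeff1 coeff2
      by (simp add: pconst_add algebra_simps power2_eq_square power4_eq_xxxx power_add)
  qed
  then show ?case
    using sos_add[OF sos_mult_square[OF c] sq] \<open>c \<ge> 0\<close> by metis
qed

lemma sos_pconst_plus_plus_power:
  fixes p :: "'v rpoly"
  assumes "1 \<le> m" "\<epsilon> > 0"
  shows "\<exists>c\<ge>0. pconst \<epsilon> + p + pconst c * p ^ (2 * m) \<in> sos"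
proof -
  obtain c where "c \<ge> 0"
    and c: "pconst (\<epsilon>/2) - pconst (1/(2*\<epsilon>)) * p\<^sup>2 + pconst c * p ^ (2 * m) \<in> sos"
    using sos_pconst_minus_square_plus_power[OF assms(1), of "\<epsilon>/2" "1/(2*\<epsilon>)" p] assms(2)
    by auto
  have sq: "pconst (\<epsilon>/2) * ((1 + pconst (1/\<epsilon>) * p) * (1 + pconst (1/\<epsilon>) * p)) \<in> sos"
    using assms by (intro sos_pconst_mult sos_square) auto
  have "pconst (\<epsilon>/2) * pconst (1/\<epsilon>) * 2 = (1 :: 'v rpoly)"
    "pconst (\<epsilon>/2) * pconst (1/\<epsilon>) * pconst (1/\<epsilon>) = (pconst (1/(2*\<epsilon>)) :: 'v rpoly)"
    using assms(2) by (simp_all add: pconst_mult[symmetric] flip: pconst_numeral)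
  moreover have "pconst (\<epsilon>/2) * ((1 + pconst (1/\<epsilon>) * p) * (1 + pconst (1/\<epsilon>) * p))
      = pconst (\<epsilon>/2) + (pconst (\<epsilon>/2) * pconst (1/\<epsilon>) * 2) * p
        + (pconst (\<epsilon>/2) * pconst (1/\<epsilon>) * pconst (1/\<epsilon>)) * p\<^sup>2"
    by (simp add: algebra_simps power2_eq_square)
  ultimately have "pconst (\<epsilon>/2) * ((1 + pconst (1/\<epsilon>) * p) * (1 + pconst (1/\<epsilon>) * p))
      = pconst (\<epsilon>/2) + p + pconst (1/(2*\<epsilon>)) * p\<^sup>2"
    by simp
  moreover have "pconst (\<epsilon>/2) + pconst (\<epsilon>/2) = (pconst \<epsilon> :: 'v rpoly)"
    by (simp add: pconst_add[symmetric])
  ultimately have "pconst (\<epsilon>/2) * ((1 + pconst (1/\<epsilon>) * p) * (1 + pconst (1/\<epsilon>) * p))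
      + (pconst (\<epsilon>/2) - pconst (1/(2*\<epsilon>)) * p\<^sup>2 + pconst c * p ^ (2 * m))
      = pconst \<epsilon> + p + pconst c * p ^ (2 * m)"
    by (simp add: algebra_simps)
  then show ?thesis using sos_add[OF sq c] \<open>c \<ge> 0\<close> by metis
qed

subsection \<open>Truncated quadratic modules\<close>

lemma qmod_truncI:
  assumes "s0 \<in> sos" "s0 \<in> polys_upto K"
    "\<And>j. j < length gs \<Longrightarrow> ss j \<in> sos \<and> (ss j = 0 \<or> tdeg (ss j) + tdeg (gs ! j) \<le> K)"
  shows "s0 + (\<Sum>j<length gs. ss j * gs ! j) \<in> qmod_trunc gs K"
  unfolding qmod_trunc_def using assms by blast

lemma qmod_truncE:
  assumes "q \<in> qmod_trunc gs K"
  obtains s0 ss where "q = s0 + (\<Sum>j<length gs. ss j * gs ! j)" "s0 \<in> sos" "s0 \<in> polys_upto K"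
    "\<And>j. j < length gs \<Longrightarrow> ss j \<in> sos \<and> (ss j = 0 \<or> tdeg (ss j) + tdeg (gs ! j) \<le> K)"
  using assms unfolding qmod_trunc_def by blast

lemma deg_bound_add:
  assumes "a = 0 \<or> tdeg a + n \<le> K" "b = 0 \<or> tdeg b + n \<le> K"
  shows "a + b = 0 \<or> tdeg (a + b) + n \<le> K"
proof (cases "a = 0 \<or> b = 0")
  case False
  then have "a \<in> polys_upto (K - n)" "b \<in> polys_upto (K - n)" "n \<le> K"
    using assms by (auto simp: tdeg_le_iff[symmetric])
  then have "a + b \<in> polys_upto (K - n)" "n \<le> K" by (auto intro: polys_upto_add)
  then show ?thesis by (auto simp: tdeg_le_iff[symmetric])
qed (use assms in auto)

lemma deg_bound_mult:
  fixes a h :: "('v::finite) rpoly"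
  assumes "a = 0 \<or> tdeg a + n \<le> K" "h \<in> polys_upto D"
  shows "h * a = 0 \<or> tdeg (h * a) + n \<le> K + D"
proof (cases "a = 0")
  case False
  then have "a \<in> polys_upto (K - n)" "n \<le> K"
    using assms by (auto simp: tdeg_le_iff[symmetric])
  moreover have "h * a \<in> polys_upto (D + (K - n))"
    using polys_upto_mult[OF assms(2)] calculation(1) by blast
  ultimately show ?thesis by (auto simp: tdeg_le_iff[symmetric])
qed simp

lemma qmod_trunc_mono:
  assumes "q \<in> qmod_trunc gs K" "K \<le> K'"
  shows "q \<in> qmod_trunc gs K'"
proof -
  obtain s0 ss where q: "q = s0 + (\<Sum>j<length gs. ss j * gs ! j)"
    and "s0 \<in> sos" "s0 \<in> polys_upto K"
    and ss: "\<And>j. j < length gs \<Longrightarrow> ss j \<in> sos \<and> (ss j = 0 \<or> tdeg (ss j) + tdeg (gs ! j) \<le> K)"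
    using assms(1) by (rule qmod_truncE) blast
  show ?thesis
    unfolding q using assms(2) \<open>s0 \<in> sos\<close> polys_upto_mono[OF \<open>s0 \<in> polys_upto K\<close>]
  proof (intro qmod_truncI)
    show "ss j \<in> sos \<and> (ss j = 0 \<or> tdeg (ss j) + tdeg (gs ! j) \<le> K')" if "j < length gs" for j
      using ss[OF that] assms(2) by linarith
  qed auto
qed

lemma qmod_trunc_add:
  assumes "p \<in> qmod_trunc gs K" "q \<in> qmod_trunc gs K"
  shows "p + q \<in> qmod_trunc gs K"
proof -
  obtain s0 ss where p: "p = s0 + (\<Sum>j<length gs. ss j * gs ! j)"
    and s0: "s0 \<in> sos" "s0 \<in> polys_upto K"
    and ss: "\<And>j. j < length gs \<Longrightarrow> ss j \<in> sos \<and> (ss j = 0 \<or> tdeg (ss j) + tdeg (gs ! j) \<le> K)"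
    using assms(1) by (rule qmod_truncE) blast
  obtain t0 tt where q: "q = t0 + (\<Sum>j<length gs. tt j * gs ! j)"
    and t0: "t0 \<in> sos" "t0 \<in> polys_upto K"
    and tt: "\<And>j. j < length gs \<Longrightarrow> tt j \<in> sos \<and> (tt j = 0 \<or> tdeg (tt j) + tdeg (gs ! j) \<le> K)"
    using assms(2) by (rule qmod_truncE) blast
  have "p + q = (s0 + t0) + (\<Sum>j<length gs. (ss j + tt j) * gs ! j)"
    unfolding p q by (simp add: algebra_simps sum.distrib)
  also have "\<dots> \<in> qmod_trunc gs K"
    using s0 t0 ss tt by (intro qmod_truncI) (auto simp: sos_add polys_upto_add deg_bound_add)
  finally show ?thesis .
qed

lemma sos_mult_qmod_trunc:
  fixes gs :: "('v::finite) rpoly list"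
  assumes "q \<in> qmod_trunc gs K" "h \<in> sos" "h \<in> polys_upto D"
  shows "h * q \<in> qmod_trunc gs (K + D)"
proof -
  obtain s0 ss where q: "q = s0 + (\<Sum>j<length gs. ss j * gs ! j)"
    and s0: "s0 \<in> sos" "s0 \<in> polys_upto K"
    and ss: "\<And>j. j < length gs \<Longrightarrow> ss j \<in> sos \<and> (ss j = 0 \<or> tdeg (ss j) + tdeg (gs ! j) \<le> K)"
    using assms(1) by (rule qmod_truncE) blast
  have "h * q = h * s0 + (\<Sum>j<length gs. (h * ss j) * gs ! j)"
    unfolding q by (simp add: algebra_simps sum_distrib_left)
  also have "\<dots> \<in> qmod_trunc gs (K + D)"
  proof (rule qmod_truncI)
    show "h * s0 \<in> sos" "h * s0 \<in> polys_upto (K + D)"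
      using sos_mult[OF assms(2) s0(1)] polys_upto_mult[OF assms(3) s0(2)] by (simp_all add: add.commute)
    show "h * ss j \<in> sos \<and> (h * ss j = 0 \<or> tdeg (h * ss j) + tdeg (gs ! j) \<le> K + D)"
      if "j < length gs" for j
      using ss[OF that] deg_bound_mult[OF _ assms(3)] by (simp add: sos_mult assms(2))
  qed
  finally show ?thesis .
qed

lemma sos_in_qmod_trunc:
  assumes "s \<in> sos" "s \<in> polys_upto K"
  shows "s \<in> qmod_trunc gs K"
  using qmod_truncI[OF assms, of gs "\<lambda>_. 0"] sos_0 by simp

lemma pconst_mult_qmod_trunc:
  fixes gs :: "('v::finite) rpoly list"
  assumes "q \<in> qmod_trunc gs K" "c \<ge> 0"
  shows "pconst c * q \<in> qmod_trunc gs K"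
  using sos_mult_qmod_trunc[OF assms(1) sos_pconst[OF assms(2)] pconst_in_polys_upto[of c 0]]
  by simp

subsection \<open>Approximation by \<open>p + \<epsilon> \<in> Q\<^sub>k\<close>\<close>

definition qmod_trunc_eps :: "'v rpoly list \<Rightarrow> nat \<Rightarrow> 'v rpoly set" where
  "qmod_trunc_eps gs K = {p. \<forall>\<epsilon>>0. p + pconst \<epsilon> \<in> qmod_trunc gs K}"

lemma qmod_trunc_eps_0:
  fixes gs :: "('v::finite) rpoly list"
  shows "0 \<in> qmod_trunc_eps gs K"
  unfolding qmod_trunc_eps_def
proof (intro CollectI allI impI)
  fix \<epsilon> :: real assume "\<epsilon> > 0"
  then show "0 + pconst \<epsilon> \<in> qmod_trunc gs K"
    by (simp add: sos_in_qmod_trunc sos_pconst pconst_in_polys_upto)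
qed

lemma qmod_trunc_eps_add:
  assumes "p \<in> qmod_trunc_eps gs K" "q \<in> qmod_trunc_eps gs K"
  shows "p + q \<in> qmod_trunc_eps gs K"
  unfolding qmod_trunc_eps_def
proof (intro CollectI allI impI)
  fix \<epsilon> :: real assume "\<epsilon> > 0"
  then have "p + pconst (\<epsilon>/2) \<in> qmod_trunc gs K" "q + pconst (\<epsilon>/2) \<in> qmod_trunc gs K"
    using assms by (simp_all add: qmod_trunc_eps_def)
  then have "(p + pconst (\<epsilon>/2)) + (q + pconst (\<epsilon>/2)) \<in> qmod_trunc gs K"
    by (rule qmod_trunc_add)
  then show "p + q + pconst \<epsilon> \<in> qmod_trunc gs K"
    by (simp add: algebra_simps flip: pconst_add)
qed

lemma pconst_mult_qmod_trunc_eps: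
  fixes gs :: "('v::finite) rpoly list"
  assumes "p \<in> qmod_trunc_eps gs K" "c \<ge> 0"
  shows "pconst c * p \<in> qmod_trunc_eps gs K"
proof (cases "c = 0")
  case False
  show ?thesis
    unfolding qmod_trunc_eps_def
  proof (intro CollectI allI impI)
    fix \<epsilon> :: real assume "\<epsilon> > 0"
    then have "pconst c * (p + pconst (\<epsilon> / c)) \<in> qmod_trunc gs K"
      using assms False by (intro pconst_mult_qmod_trunc) (auto simp: qmod_trunc_eps_def)
    then show "pconst c * p + pconst \<epsilon> \<in> qmod_trunc gs K"
      using False by (simp add: algebra_simps flip: pconst_mult)
  qed
qed (simp add: qmod_trunc_eps_0)

lemma real_radical_uminus: "p \<in> real_radical I \<Longrightarrow> - p \<in> real_radical I"
  by (simp add: real_radical_def power_mult)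

text \<open>From \<open>p\<^sup>2\<^sup>m + s = -q\<close> we get \<open>-p\<^sup>2\<^sup>m = q + s \<in> Q\<close>; multiplying by \<open>p\<^sup>2\<close>
  makes the exponent positive.\<close>
lemma real_radical_neg_power_in_qmod_trunc:
  fixes gs :: "('v::finite) rpoly list"
  assumes "p \<in> real_radical (supp (qmod gs))"
  shows "\<exists>m\<ge>1. \<exists>K. - (p ^ (2 * m)) \<in> qmod_trunc gs K"
proof -
  obtain m s q where "s \<in> sos" "q \<in> qmod gs" "p ^ (2 * m) + s = - q"
    using assms by (auto simp: real_radical_def supp_def)
  moreover from \<open>q \<in> qmod gs\<close> obtain K where "q \<in> qmod_trunc gs K"
    by (auto simp: qmod_def)
  moreover have "s \<in> qmod_trunc gs (tdeg s)"
    using \<open>s \<in> sos\<close> polys_upto_tdeg by (rule sos_in_qmod_trunc)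
  ultimately have "q + s \<in> qmod_trunc gs (max K (tdeg s))"
    by (intro qmod_trunc_add) (auto elim: qmod_trunc_mono)
  moreover have "q + s = - (p ^ (2 * m))"
    using \<open>p ^ (2 * m) + s = - q\<close> by (simp add: eq_neg_iff_add_eq_0 algebra_simps)
  ultimately have "- (p ^ (2 * m)) \<in> qmod_trunc gs (max K (tdeg s))"
    by simp
  then have "p * p * - (p ^ (2 * m)) \<in> qmod_trunc gs (max K (tdeg s) + (tdeg p + tdeg p))"
    by (intro sos_mult_qmod_trunc sos_square polys_upto_mult polys_upto_tdeg)
  moreover have "p * p * - (p ^ (2 * m)) = - (p ^ (2 * Suc m))"
    by (simp add: power_add power2_eq_square algebra_simps)
  ultimately show ?thesis by (metis le_add1 plus_1_eq_Suc)
qed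

text \<open>The degree bound \<open>K\<close> does not depend on \<open>\<epsilon>\<close>: only the coefficient \<open>c\<close> of the
  certificate does.\<close>
lemma eventually_in_qmod_trunc_eps:
  fixes gs :: "('v::finite) rpoly list"
  assumes "- (p ^ (2 * m)) \<in> qmod_trunc gs K0" "1 \<le> m"
  shows "eventually (\<lambda>K. p \<in> qmod_trunc_eps gs K) sequentially"
  unfolding eventually_sequentially
proof (intro exI allI impI)
  fix K assume K: "max K0 (2 * m * tdeg p) \<le> K"
  show "p \<in> qmod_trunc_eps gs K"
    unfolding qmod_trunc_eps_def
  proof (intro CollectI allI impI)
    fix \<epsilon> :: real assume "\<epsilon> > 0"
    then obtain c where "c \<ge> 0" and c: "pconst \<epsilon> + p + pconst c * p ^ (2 * m) \<in> sos"
      using sos_pconst_plus_plus_power[OF assms(2)] by blast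
    have "p \<in> polys_upto (2 * m * tdeg p)"
      using polys_upto_tdeg by (rule polys_upto_mono) (use assms(2) in simp)
    moreover have "pconst c * p ^ (2 * m) \<in> polys_upto (0 + 2 * m * tdeg p)"
      by (intro polys_upto_mult pconst_in_polys_upto polys_upto_power polys_upto_tdeg)
    ultimately have "pconst \<epsilon> + p + pconst c * p ^ (2 * m) \<in> polys_upto K"
      using K by (auto intro!: polys_upto_add pconst_in_polys_upto intro: polys_upto_mono)
    with c have "pconst \<epsilon> + p + pconst c * p ^ (2 * m) \<in> qmod_trunc gs K"
      by (rule sos_in_qmod_trunc)
    moreover have "pconst c * - (p ^ (2 * m)) \<in> qmod_trunc gs K"
      using K by (intro pconst_mult_qmod_trunc[OF qmod_trunc_mono[OF assms(1)] \<open>c \<ge> 0\<close>]) simp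
    ultimately have "pconst \<epsilon> + p + pconst c * p ^ (2 * m) + pconst c * - (p ^ (2 * m))
        \<in> qmod_trunc gs K"
      by (rule qmod_trunc_add)
    then show "p + pconst \<epsilon> \<in> qmod_trunc gs K"
      by (simp add: algebra_simps)
  qed
qed

lemma real_radical_eventually_in_qmod_trunc_eps:
  fixes gs :: "('v::finite) rpoly list"
  assumes "p \<in> real_radical (supp (qmod gs))"
  shows "eventually (\<lambda>K. p \<in> qmod_trunc_eps gs K) sequentially"
  using real_radical_neg_power_in_qmod_trunc[OF assms] eventually_in_qmod_trunc_eps by blast

subsection \<open>Polynomials as a real vector space\<close>

text \<open>Interpreted only here: the locale's scaling simp rules reverse \<open>pconst_mult\<close> and make
  the simplifier loop in the earlier algebraic proofs.\<close>
interpretation rpoly: vector_space "\<lambda>c (p::'v rpoly). pconst c * p"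
  by unfold_locales (auto simp: algebra_simps pconst_add pconst_mult)

lemma lookup_le_mon_deg: "Poly_Mapping.lookup m v \<le> mon_deg m"
  unfolding mon_deg_def
  by (cases "v \<in> Poly_Mapping.keys m") (auto intro: member_le_sum simp: in_keys_iff)

lemma finite_mon_deg_le: "finite {m :: ('v::finite) \<Rightarrow>\<^sub>0 nat. mon_deg m \<le> d}"
proof -
  have "Poly_Mapping.lookup ` {m :: 'v \<Rightarrow>\<^sub>0 nat. mon_deg m \<le> d} \<subseteq> (\<Pi>\<^sub>E v \<in> UNIV. {..d})"
    using lookup_le_mon_deg order_trans by fastforce
  then have "finite (Poly_Mapping.lookup ` {m :: 'v \<Rightarrow>\<^sub>0 nat. mon_deg m \<le> d})"
    by (rule finite_subset) (intro finite_PiE, auto)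
  moreover have "inj_on Poly_Mapping.lookup {m :: 'v \<Rightarrow>\<^sub>0 nat. mon_deg m \<le> d}"
    by (rule inj_onI) (simp add: poly_mapping_eqI)
  ultimately show ?thesis by (rule finite_imageD)
qed

lemma polys_upto_span_monomials:
  fixes p :: "('v::finite) rpoly"
  assumes "p \<in> polys_upto d"
  shows "p \<in> rpoly.span ((\<lambda>m. Poly_Mapping.single m 1) ` {m. mon_deg m \<le> d})"
proof -
  have "p = (\<Sum>m\<in>Poly_Mapping.keys p. pconst (Poly_Mapping.lookup p m) * Poly_Mapping.single m 1)"
    by (rule poly_mapping_eqI)
       (auto simp: lookup_sum lookup_single when_def in_keys_iff pconst_def mult_single)
  also have "\<dots> \<in> rpoly.span ((\<lambda>m. Poly_Mapping.single m 1) ` {m. mon_deg m \<le> d})"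
    using assms
    by (intro rpoly.span_sum rpoly.span_scale rpoly.span_base) (auto simp: polys_upto_def)
  finally show ?thesis .
qed

lemma independent_polys_upto_finite:
  fixes B :: "('v::finite) rpoly set"
  assumes "B \<subseteq> polys_upto d" "rpoly.independent B"
  shows "finite B"
  using rpoly.independent_span_bound[OF finite_imageI[OF finite_mon_deg_le] assms(2)]
    assms(1) polys_upto_span_monomials by blast

lemma subspace_qmod_trunc_eps_symmetric:
  fixes gs :: "('v::finite) rpoly list"
  shows "rpoly.subspace {p. p \<in> qmod_trunc_eps gs K \<and> - p \<in> qmod_trunc_eps gs K}"
  unfolding rpoly.subspace_def
proof (intro conjI ballI allI)
  fix c :: real and p assume p: "p \<in> {p. p \<in> qmod_trunc_eps gs K \<and> - p \<in> qmod_trunc_eps gs K}"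
  have "pconst \<bar>c\<bar> * p \<in> qmod_trunc_eps gs K \<and> - (pconst \<bar>c\<bar> * p) \<in> qmod_trunc_eps gs K"
    using p pconst_mult_qmod_trunc_eps[of p gs K "\<bar>c\<bar>"] pconst_mult_qmod_trunc_eps[of "- p" gs K "\<bar>c\<bar>"]
    by simp
  then show "pconst c * p \<in> {p. p \<in> qmod_trunc_eps gs K \<and> - p \<in> qmod_trunc_eps gs K}"
    by (cases "c \<ge> 0") (auto simp: pconst_uminus)
next
  fix p q assume "p \<in> {p. p \<in> qmod_trunc_eps gs K \<and> - p \<in> qmod_trunc_eps gs K}"
    "q \<in> {p. p \<in> qmod_trunc_eps gs K \<and> - p \<in> qmod_trunc_eps gs K}"
  then show "p + q \<in> {p. p \<in> qmod_trunc_eps gs K \<and> - p \<in> qmod_trunc_eps gs K}"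
    using qmod_trunc_eps_add[of p gs K q] qmod_trunc_eps_add[of "- p" gs K "- q"]
    by (simp add: add.commute)
qed (simp add: qmod_trunc_eps_0)

lemma qmod_trunc_eps_subset_closure:
  assumes "p \<in> qmod_trunc_eps gs K" "p \<in> polys_upto K"
  shows "p \<in> closure_in_deg K (qmod_trunc gs K)"
  unfolding closure_in_deg_def
proof (intro CollectI conjI)
  define f where "f t = Poly_Mapping.lookup (p + pconst t)" for t
  have "f = (\<lambda>t m. Poly_Mapping.lookup p m + t * (if m = 0 then 1 else 0))"
    by (simp add: fun_eq_iff f_def lookup_add pconst_def lookup_single when_def)
  then have "continuous_on UNIV f"
    by (auto intro!: continuous_on_coordinatewise_then_product continuous_intros)
  then have "(f \<longlongrightarrow> f 0) (at 0 within UNIV)"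
    by (simp add: continuous_on_def)
  then have "(f \<longlongrightarrow> f 0) (at 0 within {0<..})"
    by (rule tendsto_within_subset) simp
  moreover have "f 0 = Poly_Mapping.lookup p"
    by (simp add: f_def)
  ultimately have lim: "(f \<longlongrightarrow> Poly_Mapping.lookup p) (at_right 0)"
    by simp
  have "\<forall>\<^sub>F t in at_right 0. f t \<in> Poly_Mapping.lookup ` (qmod_trunc gs K \<inter> polys_upto K)"
    using eventually_at_right_less
  proof (rule eventually_mono)
    fix t :: real assume "0 < t"
    then have "p + pconst t \<in> qmod_trunc gs K \<inter> polys_upto K"
      using assms by (auto simp: qmod_trunc_eps_def intro: polys_upto_add pconst_in_polys_upto)
    then show "f t \<in> Poly_Mapping.lookup ` (qmod_trunc gs K \<inter> polys_upto K)"
      unfolding f_def by blast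
  qed
  then have "\<forall>\<^sub>F t in at_right 0. f t \<in> closure (Poly_Mapping.lookup ` (qmod_trunc gs K \<inter> polys_upto K))"
    by (rule eventually_mono) (meson closure_subset subsetD)
  then show "Poly_Mapping.lookup p \<in> closure (Poly_Mapping.lookup ` (qmod_trunc gs K \<inter> polys_upto K))"
    using lim by (rule Lim_in_closed_set[OF closed_closure _ trivial_limit_at_right_real])
qed (fact assms(2))

theorem mainTheorem12:
  fixes gs :: "('v::finite) rpoly list"
  shows "\<forall>d::nat. \<exists>k\<ge>d.
           real_radical (supp (qmod gs)) \<inter> polys_upto d
             \<subseteq> closure_in_deg k (qmod_trunc gs k)"
proof
  fix d :: nat
  define J where "J = real_radical (supp (qmod gs)) \<inter> polys_upto d"
  define W where "W K = {p. p \<in> qmod_trunc_eps gs K \<and> - p \<in> qmod_trunc_eps gs K}" for K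
  obtain B where B: "B \<subseteq> J" "rpoly.independent B" "J \<subseteq> rpoly.span B"
    by (rule rpoly.maximal_independent_subset)
  have "finite B"
    using B(1,2) by (auto simp: J_def intro: independent_polys_upto_finite)
  moreover have "\<forall>b\<in>B. eventually (\<lambda>K. b \<in> W K) sequentially"
    using B(1) by (auto simp: J_def W_def real_radical_uminus
        intro!: eventually_conj real_radical_eventually_in_qmod_trunc_eps)
  ultimately have "eventually (\<lambda>K. B \<subseteq> W K \<and> d \<le> K) sequentially"
    by (auto simp: subset_eq eventually_ball_finite_distrib[symmetric] intro!: eventually_conj
        eventually_ge_at_top)
  then obtain K where "B \<subseteq> W K" "d \<le> K"
    using eventually_sequentially by auto
  then have "rpoly.span B \<subseteq> W K"
    unfolding W_def by (intro rpoly.span_minimal subspace_qmod_trunc_eps_symmetric)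
  then have "J \<subseteq> qmod_trunc_eps gs K \<inter> polys_upto K"
    using B(3) \<open>d \<le> K\<close> by (auto simp: J_def W_def intro: polys_upto_mono)
  then show "\<exists>k\<ge>d. J \<subseteq> closure_in_deg k (qmod_trunc gs k)"
    using \<open>d \<le> K\<close> qmod_trunc_eps_subset_closure by blast
qed

end
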